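(* For $\tau=\tau_F$ one has $\widehat\tau_{\mathbf 0}=1$, and $\widehat\tau_{\mathbf n}=0$ for every $\mathbf n\in\mathbb N_0^d\setminus\{\mathbf 0\}$ that lies in none of the blocks $B_{2m_s}$, $s\in\mathbb N$. The same holds for the coefficients $\widehat{\tau^{\boldsymbol\pi}}_{\mathbf n}$ of $\tau^{\boldsymbol\pi}=\tau_{F^{\boldsymbol\pi}}$ for every sequence $\boldsymbol\pi=(\boldsymbol\pi_s)_{s\in\mathbb N}$ of permutations $\boldsymbol\pi_s$ of $\{0,\dots,2^{m_s}-1\}^d$.
   Context: Fix $d\ge2$. $\mathbb G$ is the dyadic group: sequences $g=(g_k)_{k\ge0}$, $g_k\in\{0,1\}$, coordinatewise addition mod 2, product topology; $\mathbb G^d$ its $d$-th power. For $n\in\mathbb N_0$, $n=\sum_kn_k2^k$, $n_k\in\{0,1\}$. Dyadic interval of rank $k$: $\Delta^{(k)}_m=\{g: g_t=m_{k-1-t},\ 0\le t<k\}$; dyadic cube $\Delta^{(k)}_{\mathbf m}=\prod_l\Delta^{(k)}_{m^l}$. Vector order coordinatewise, $\mathbf 0,\mathbf 1$ constant vectors; $B_k=\{\mathbf n\in\mathbb N_0^d: 2^k\mathbf 1\le\mathbf n<2^{k+1}\mathbf 1\}$. Walsh functions $W_n(g)=\prod_k(-1)^{g_kn_k}$, $W_{\mathbf n}(\mathbf g)=\prod_lW_{n^l}(g^l)$; $W^{(k)}_{\mathbf n\mathbf m}$ is the constant value of $W_{\mathbf n}$ on $\Delta^{(k)}_{\mathbf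 m}$ ($\mathbf n,\mathbf m<2^k\mathbf 1$); $R_{k\mathbf 1}:=W_{2^k\mathbf 1}$. Quasimeasure: $\tau$ on dyadic cubes with $\tau(\Delta^{(k)}_{\mathbf m})=\sum_{\boldsymbol\sigma\in\{0,1\}^d}\tau(\Delta^{(k+1)}_{2\mathbf m+\boldsymbol\sigma})$; $\widehat\tau_{\mathbf n}=\sum_{\mathbf m<2^k\mathbf 1}W^{(k)}_{\mathbf n\mathbf m}\tau(\Delta^{(k)}_{\mathbf m})$ for $\mathbf n<2^k\mathbf 1$. For nonempty closed $E$, $\tau_E$ is the unique nonnegative quasimeasure with $\tau_E(\mathbb G^d)=1$, $\tau_E(\Delta)=0$ iff $\Delta\cap E=\emptyset$, splitting the value of a cube meeting $E$ equally among its $2^d$ children that meet $E$. Let $m_1=0$, $m_{s+1}=2(2m_s+1)$. $F_s=\bigcup_{\mathbf m,\mathbf m'<2^{m_s}\mathbf 1}\{\mathbf g\in\Delta^{(2m_s)}_{2^{m_s}\mathbf m+\mathbf m'}: R_{2m_s\mathbf 1}(\mathbf g)=W^{(m_s)}_{\mathbf m\mathbf m'}\}$, $F=\bigcap_sF_s$; $F^{\boldsymbol\pi}_s$ is defined the same way with $W^{(m_s)}_{\boldsymbol\pi_s(\mathbf m)\,\mathbf m'}$ in place of $W^{(m_s)}_{\mathbf m\mathbf m'}$, and $F^{\boldsymbol\pi}=\bigcap_sF^{\boldsymbol\pi}_s$. *)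

theory Defs
  imports Complex_Main
begin

text \<open>Points of the dyadic group G are maps nat => bool (g_k = 1 iff g k);
  points of G^d are maps 'd => nat => bool, where 'd is a finite index type
  with CARD('d) = d.\<close>

definition dint :: "nat \<Rightarrow> nat \<Rightarrow> (nat \<Rightarrow> bool) set" where
  "dint k m = {g. \<forall>t<k. g t = bit m (k - 1 - t)}"

definition dcube :: "nat \<Rightarrow> ('d \<Rightarrow> nat) \<Rightarrow> ('d \<Rightarrow> nat \<Rightarrow> bool) set" where
  "dcube k m = {g. \<forall>l. g l \<in> dint k (m l)}"

definition dbox :: "nat \<Rightarrow> ('d \<Rightarrow> nat) set" where
  "dbox k = {m. \<forall>l. m l < 2 ^ k}"

definition block :: "nat \<Rightarrow> ('d \<Rightarrow> nat) set" where
  "block k = {n. \<forall>l. 2 ^ k \<le> n l \<and> n l < 2 ^ (k + 1)}"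

text \<open>Walsh function W_n(g) = prod_k (-1)^(g_k n_k).\<close>
definition walsh :: "nat \<Rightarrow> (nat \<Rightarrow> bool) \<Rightarrow> real" where
  "walsh n g = (-1) ^ card {t. bit n t \<and> g t}"

definition walshd :: "('d::finite \<Rightarrow> nat) \<Rightarrow> ('d \<Rightarrow> nat \<Rightarrow> bool) \<Rightarrow> real" where
  "walshd n g = (\<Prod>l\<in>UNIV. walsh (n l) (g l))"

text \<open>The point of the dyadic interval of rank k and index m with all
  coordinates t >= k equal to 0 (W_n is constant on the interval when n < 2^k).\<close>
definition dpt :: "nat \<Rightarrow> nat \<Rightarrow> (nat \<Rightarrow> bool)" where
  "dpt k m = (\<lambda>t. t < k \<and> bit m (k - 1 - t))"

definition Wk :: "nat \<Rightarrow> ('d::finite \<Rightarrow> nat) \<Rightarrow> ('d \<Rightarrow> nat) \<Rightarrow> real" where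
  "Wk k n m = walshd n (\<lambda>l. dpt k (m l))"

definition Rk :: "nat \<Rightarrow> ('d::finite \<Rightarrow> nat \<Rightarrow> bool) \<Rightarrow> real" where
  "Rk k g = walshd (\<lambda>l. 2 ^ k) g"

text \<open>Fourier coefficient of a quasimeasure tau (given as tau k m = tau(Delta^(k)_m)),
  computed at the least rank k with n < 2^k 1.\<close>
definition fcoef :: "(nat \<Rightarrow> ('d::finite \<Rightarrow> nat) \<Rightarrow> real) \<Rightarrow> ('d \<Rightarrow> nat) \<Rightarrow> real" where
  "fcoef tau n = (let k = (LEAST k. \<forall>l. n l < 2 ^ k) in
      (\<Sum>m\<in>dbox k. Wk k n m * tau k m))"

fun tauE :: "('d \<Rightarrow> nat \<Rightarrow> bool) set \<Rightarrow> nat \<Rightarrow> ('d \<Rightarrow> nat) \<Rightarrow> real" where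
  "tauE E 0 m = (if E = {} then 0 else 1)"
| "tauE E (Suc k) m =
     (if dcube (Suc k) m \<inter> E = {} then 0
      else tauE E k (\<lambda>l. m l div 2) /
        real (card {\<sigma>::'d \<Rightarrow> bool.
                dcube (Suc k) (\<lambda>l. 2 * (m l div 2) + of_bool (\<sigma> l)) \<inter> E \<noteq> {}}))"

text \<open>m_1 = 0, m_{s+1} = 2(2 m_s + 1)  (index s >= 1; the value at 0 is unused).\<close>
fun mseq :: "nat \<Rightarrow> nat" where
  "mseq 0 = 0"
| "mseq (Suc 0) = 0"
| "mseq (Suc (Suc s)) = 2 * (2 * mseq (Suc s) + 1)"

definition Fpi_s :: "(('d::finite \<Rightarrow> nat) \<Rightarrow> ('d \<Rightarrow> nat)) \<Rightarrow> nat \<Rightarrow> ('d \<Rightarrow> nat \<Rightarrow> bool) set" where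
  "Fpi_s p s = (\<Union>m\<in>dbox (mseq s). \<Union>m'\<in>dbox (mseq s).
      {g \<in> dcube (2 * mseq s) (\<lambda>l. 2 ^ mseq s * m l + m' l).
         Rk (2 * mseq s) g = Wk (mseq s) (p m) m'})"

definition F_s :: "nat \<Rightarrow> ('d::finite \<Rightarrow> nat \<Rightarrow> bool) set" where
  "F_s s = (\<Union>m\<in>dbox (mseq s). \<Union>m'\<in>dbox (mseq s).
      {g \<in> dcube (2 * mseq s) (\<lambda>l. 2 ^ mseq s * m l + m' l).
         Rk (2 * mseq s) g = Wk (mseq s) m m'})"

definition Fset :: "('d::finite \<Rightarrow> nat \<Rightarrow> bool) set" where
  "Fset = (\<Inter>s\<in>{1..}. F_s s)"

definition Fpi :: "(nat \<Rightarrow> ('d::finite \<Rightarrow> nat) \<Rightarrow> ('d \<Rightarrow> nat)) \<Rightarrow> ('d \<Rightarrow> nat \<Rightarrow> bool) set" where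
  "Fpi \<pi> = (\<Inter>s\<in>{1..}. Fpi_s (\<pi> s) s)"

end

theory Submission
  imports Defs "HOL-Library.Disjoint_Sets"
begin

text \<open>
  Let \<open>n \<noteq> 0\<close> and let \<open>k = j + 1\<close> be the least rank with \<open>n < 2\<^sup>k\<close>, so that
  bit \<open>j\<close> of some coordinate \<open>n\<^sub>l\<^sub>1\<close> is set.  Grouping the sum defining the coefficient
  by the parent cubes of rank \<open>j\<close>, the measure splits equally among the children meeting
  \<open>F\<^sup>\<pi>\<close>, so it suffices that \<open>W\<^sub>n\<close> sums to zero over them.
  Membership in \<open>F\<^sub>s\<^sup>\<pi>\<close> depends only on the digits up to \<open>2m\<^sub>s\<close>, and flipping digit \<open>2m\<^sub>s\<close>
  of a single coordinate toggles it; correcting digit \<open>2m\<^sub>s\<close> whenever necessary extends every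
  point satisfying the constraints below some rank to a point of \<open>F\<^sup>\<pi>\<close>.  Hence flipping
  digit \<open>j\<close> of coordinate \<open>l\<^sub>1\<close> (and, if \<open>j = 2m\<^sub>s\<close>, also of a coordinate \<open>l\<^sub>2\<close> where bit \<open>j\<close>
  of \<open>n\<^sub>l\<^sub>2\<close> is clear, which exists as \<open>n \<notin> B\<^sub>2\<^sub>m\<^sub>s\<close>) pairs off these children with
  opposite values of \<open>W\<^sub>n\<close>.
\<close>

section \<open>Digits and dyadic cubes\<close>

definition agree_below :: "nat \<Rightarrow> ('d \<Rightarrow> nat \<Rightarrow> bool) \<Rightarrow> ('d \<Rightarrow> nat \<Rightarrow> bool) \<Rightarrow> bool" where
  "agree_below K g h \<longleftrightarrow> (\<forall>l. \<forall>t<K. g l t = h l t)"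

definition flip_digit :: "'d \<Rightarrow> nat \<Rightarrow> ('d \<Rightarrow> nat \<Rightarrow> bool) \<Rightarrow> ('d \<Rightarrow> nat \<Rightarrow> bool)" where
  "flip_digit l t g = g(l := (g l)(t := \<not> g l t))"

lemma agree_below_refl: "agree_below K g g"
  by (simp add: agree_below_def)

lemma agree_below_sym: "agree_below K g h \<Longrightarrow> agree_below K h g"
  by (simp add: agree_below_def)

lemma agree_below_trans: "agree_below K g h \<Longrightarrow> agree_below K h i \<Longrightarrow> agree_below K g i"
  by (simp add: agree_below_def)

lemma agree_below_mono: "agree_below K g h \<Longrightarrow> K' \<le> K \<Longrightarrow> agree_below K' g h"
  by (simp add: agree_below_def)

lemma agree_below_flip_digit: "K \<le> t \<Longrightarrow> agree_below K (flip_digit l t g) g"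
  by (simp add: agree_below_def flip_digit_def)

lemma not_bit_of_less_power: "(a::nat) < 2 ^ k \<Longrightarrow> k \<le> i \<Longrightarrow> \<not> bit a i"
  by (metis bit_take_bit_iff not_le take_bit_nat_eq_self)

lemma bit_of_between_powers: "(2::nat) ^ j \<le> x \<Longrightarrow> x < 2 ^ Suc j \<Longrightarrow> bit x j"
proof -
  assume "2 ^ j \<le> x" "x < 2 ^ Suc j"
  then have "x div 2 ^ j < 2" "0 < x div 2 ^ j"
    by (simp_all add: div_less_iff_less_mult mult.commute div_greater_zero_iff)
  then have "x div 2 ^ j = 1"
    by simp
  then show "bit x j"
    by (simp add: bit_iff_odd)
qed

lemma mem_dcube_iff: "g \<in> dcube k m \<longleftrightarrow> (\<forall>l. \<forall>t<k. g l t = bit (m l) (k - 1 - t))"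
  by (simp add: dcube_def dint_def)

lemma dcube_agree_below: "g \<in> dcube k m \<Longrightarrow> agree_below k g h \<Longrightarrow> h \<in> dcube k m"
  by (simp add: mem_dcube_iff agree_below_def)

lemma finite_dbox: "finite (dbox k :: ('d::finite \<Rightarrow> nat) set)"
proof -
  have "(dbox k :: ('d \<Rightarrow> nat) set) = Pi\<^sub>E UNIV (\<lambda>_. {..<2 ^ k})"
    by (auto simp: dbox_def PiE_def Pi_def)
  then show ?thesis
    by (simp add: finite_PiE)
qed

lemma ex_dcube: "\<exists>m\<in>dbox k. g \<in> dcube k m"
proof (induction k)
  case 0
  show ?case
    by (rule bexI[of _ "\<lambda>_. 0"]) (simp_all add: dbox_def mem_dcube_iff)
next
  case (Suc k)
  then obtain m where m: "m \<in> dbox k" "g \<in> dcube k m"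
    by blast
  define m' where "m' = (\<lambda>l. 2 * m l + of_bool (g l k))"
  have "m' l < 2 ^ Suc k" for l
  proof -
    have "m l < 2 ^ k"
      using m(1) by (simp add: dbox_def)
    then show ?thesis
      by (cases "g l k") (simp_all add: m'_def)
  qed
  then have "m' \<in> dbox (Suc k)"
    by (simp add: dbox_def)
  moreover have "g l t = bit (m' l) (k - t)" if "t < Suc k" for l t
  proof (cases "t = k")
    case False
    then have "k - t = Suc (k - 1 - t)"
      using that by simp
    then show ?thesis
      using m(2) that False by (simp add: m'_def mem_dcube_iff bit_Suc)
  qed (simp add: m'_def bit_0)
  ultimately show ?case
    unfolding mem_dcube_iff by auto
qed

lemma dcube_index_unique:
  assumes "a \<in> dbox k" "b \<in> dbox k" "g \<in> dcube k a" "g \<in> dcube k b"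
  shows "a = b"
proof
  fix l
  show "a l = b l"
  proof (rule bit_eqI)
    fix i
    show "bit (a l) i = bit (b l) i"
    proof (cases "i < k")
      case True
      then have "k - 1 - (k - 1 - i) = i" "k - 1 - i < k"
        by simp_all
      then show ?thesis
        using assms(3,4) unfolding mem_dcube_iff by metis
    next
      case False
      moreover have "a l < 2 ^ k" "b l < 2 ^ k"
        using assms(1,2) by (simp_all add: dbox_def)
      ultimately have "\<not> bit (a l) i" "\<not> bit (b l) i"
        by (simp_all add: not_bit_of_less_power)
      then show ?thesis
        by simp
    qed
  qed
qed

lemma dbox_split_index:
  assumes "m \<in> dbox k" "m' \<in> dbox k"
  shows "(\<lambda>l. 2 ^ k * m l + m' l) \<in> dbox (2 * k)"
proof -
  have "2 ^ k * m l + m' l < 2 ^ (2 * k)" for l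
  proof -
    have "2 ^ k * m l + m' l < 2 ^ k * (m l + 1)"
      using assms(2) by (simp add: dbox_def)
    also have "\<dots> \<le> 2 ^ k * 2 ^ k"
      using assms(1) by (intro mult_le_mono2) (simp add: dbox_def Suc_le_eq)
    finally show ?thesis
      by (simp add: mult_2 power_add)
  qed
  then show ?thesis
    by (simp add: dbox_def)
qed

lemma dbox_div: "a \<in> dbox (2 * k) \<Longrightarrow> (\<lambda>l. a l div 2 ^ k) \<in> dbox k"
  by (simp add: dbox_def less_mult_imp_div_less flip: power_add mult_2)

section \<open>Walsh functions\<close>

lemma abs_walshd: "\<bar>walshd n g\<bar> = 1"
  by (simp add: walshd_def walsh_def abs_prod)

lemma abs_Wk: "\<bar>Wk k n m\<bar> = 1"
  by (simp add: Wk_def abs_walshd)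

lemma abs_Rk: "\<bar>Rk k g\<bar> = 1"
  by (simp add: Rk_def abs_walshd)

lemma walsh_flip: "walsh n (h(t := \<not> h t)) = (if bit n t then -1 else 1) * walsh n h"
proof -
  let ?A = "{u. bit n u \<and> h u}"
  let ?B = "{u. bit n u \<and> (h(t := \<not> h t)) u}"
  have walsh_eq: "walsh n h = (-1) ^ card ?A" "walsh n (h(t := \<not> h t)) = (-1) ^ card ?B"
    by (simp_all only: walsh_def)
  have "finite ?A"
  proof (rule finite_subset[of _ "{..<n}"])
    show "?A \<subseteq> {..<n}"
      using not_bit_of_less_power[OF less_exp[of n]] by (auto simp flip: not_le)
  qed simp
  consider "\<not> bit n t" | "bit n t" "h t" | "bit n t" "\<not> h t"
    by blast
  then show ?thesis
  proof cases
    case 1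
    then have "?B = ?A"
      by auto
    then show ?thesis
      using 1 by (simp add: walsh_eq)
  next
    case 2
    then have "?A = insert t ?B" "t \<notin> ?B"
      by auto
    then have "card ?A = Suc (card ?B)"
      using \<open>finite ?A\<close> by (metis card_insert_disjoint finite_insert)
    then show ?thesis
      using 2 unfolding walsh_eq by simp
  next
    case 3
    then have "?B = insert t ?A" "t \<notin> ?A"
      by auto
    then have "card ?B = Suc (card ?A)"
      using \<open>finite ?A\<close> by simp
    then show ?thesis
      using 3 unfolding walsh_eq by simp
  qed
qed

lemma walshd_flip_digit:
  "walshd n (flip_digit l t g) = (if bit (n l) t then -1 else 1) * walshd n g"
proof -
  have "walshd n (flip_digit l t g)
      = walsh (n l) ((g l)(t := \<not> g l t)) * (\<Prod>l'\<in>UNIV - {l}. walsh (n l') (g l'))"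
    unfolding walshd_def by (subst prod.remove[of _ l]) (auto simp: flip_digit_def intro!: prod.cong)
  also have "\<dots> = (if bit (n l) t then -1 else 1) * walshd n g"
    unfolding walshd_def walsh_flip by (subst (2) prod.remove[of _ l]) auto
  finally show ?thesis .
qed

lemma walsh_two_power: "walsh (2 ^ k) h = (if h k then -1 else 1)"
proof -
  have "{t. bit ((2::nat) ^ k) t \<and> h t} = (if h k then {k} else {})"
    by (auto simp: bit_exp_iff)
  then show ?thesis
    by (simp add: walsh_def)
qed

lemma Rk_agree_below: "agree_below (Suc k) g h \<Longrightarrow> Rk k g = Rk k h"
  by (simp add: Rk_def walshd_def walsh_two_power agree_below_def)

lemma Rk_flip_digit: "Rk k (flip_digit l k g) = - Rk k g"
  by (simp add: Rk_def walshd_flip_digit bit_exp_iff)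

section \<open>The sets \<open>F\<^sub>s\<^sup>\<pi>\<close>\<close>

lemma Fpi_s_agree_below:
  assumes "agree_below (Suc (2 * mseq s)) g h" "g \<in> Fpi_s p s"
  shows "h \<in> Fpi_s p s"
proof -
  have "agree_below (2 * mseq s) g h"
    using assms(1) by (rule agree_below_mono) simp
  moreover have "Rk (2 * mseq s) g = Rk (2 * mseq s) h"
    using assms(1) by (rule Rk_agree_below)
  ultimately show ?thesis
    using assms(2) dcube_agree_below unfolding Fpi_s_def by fastforce
qed

lemma mem_Fpi_s_iff:
  assumes a: "a \<in> dbox (2 * mseq s)" "g \<in> dcube (2 * mseq s) a"
  shows "g \<in> Fpi_s p s \<longleftrightarrow>
    Rk (2 * mseq s) g = Wk (mseq s) (p (\<lambda>l. a l div 2 ^ mseq s)) (\<lambda>l. a l mod 2 ^ mseq s)"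
proof -
  let ?k = "mseq s"
  let ?idx = "\<lambda>m m' l. 2 ^ ?k * m l + m' l"
  have idx_eq_iff: "a = ?idx m m' \<longleftrightarrow> m = (\<lambda>l. a l div 2 ^ ?k) \<and> m' = (\<lambda>l. a l mod 2 ^ ?k)"
    if "m' \<in> dbox ?k" for m m'
  proof
    assume "a = ?idx m m'"
    moreover have "m' l < 2 ^ ?k" for l
      using that by (simp add: dbox_def)
    ultimately show "m = (\<lambda>l. a l div 2 ^ ?k) \<and> m' = (\<lambda>l. a l mod 2 ^ ?k)"
      by simp
  qed (simp add: fun_eq_iff)
  have "g \<in> Fpi_s p s \<longleftrightarrow> (\<exists>m\<in>dbox ?k. \<exists>m'\<in>dbox ?k. a = ?idx m m' \<and> Rk (2 * ?k) g = Wk ?k (p m) m')"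
  proof
    assume "g \<in> Fpi_s p s"
    then obtain m m' where mm: "m \<in> dbox ?k" "m' \<in> dbox ?k" "g \<in> dcube (2 * ?k) (?idx m m')"
        "Rk (2 * ?k) g = Wk ?k (p m) m'"
      unfolding Fpi_s_def by blast
    moreover have "a = ?idx m m'"
      by (rule dcube_index_unique[OF a(1) dbox_split_index[OF mm(1,2)] a(2) mm(3)])
    ultimately show "\<exists>m\<in>dbox ?k. \<exists>m'\<in>dbox ?k. a = ?idx m m' \<and> Rk (2 * ?k) g = Wk ?k (p m) m'"
      by blast
  next
    assume "\<exists>m\<in>dbox ?k. \<exists>m'\<in>dbox ?k. a = ?idx m m' \<and> Rk (2 * ?k) g = Wk ?k (p m) m'"
    then obtain m m' where "m \<in> dbox ?k" "m' \<in> dbox ?k" "a = ?idx m m'"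
        "Rk (2 * ?k) g = Wk ?k (p m) m'"
      by blast
    then show "g \<in> Fpi_s p s"
      using a(2) unfolding Fpi_s_def by auto
  qed
  also have "\<dots> \<longleftrightarrow> Rk (2 * ?k) g = Wk ?k (p (\<lambda>l. a l div 2 ^ ?k)) (\<lambda>l. a l mod 2 ^ ?k)"
  proof -
    have "(\<lambda>l. a l div 2 ^ ?k) \<in> dbox ?k" "(\<lambda>l. a l mod 2 ^ ?k) \<in> dbox ?k"
      using a(1) by (simp_all add: dbox_div) (simp add: dbox_def)
    moreover have "a = ?idx (\<lambda>l. a l div 2 ^ ?k) (\<lambda>l. a l mod 2 ^ ?k)"
      by simp
    ultimately show ?thesis
      using idx_eq_iff by auto
  qed
  finally show ?thesis .
qed

lemma flip_digit_mem_Fpi_s_iff: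
  "flip_digit l (2 * mseq s) g \<in> Fpi_s p s \<longleftrightarrow> g \<notin> Fpi_s p s"
proof -
  obtain a where a: "a \<in> dbox (2 * mseq s)" "g \<in> dcube (2 * mseq s) a"
    using ex_dcube by blast
  have "flip_digit l (2 * mseq s) g \<in> dcube (2 * mseq s) a"
    using dcube_agree_below[OF a(2) agree_below_sym[OF agree_below_flip_digit]] by simp
  then have "flip_digit l (2 * mseq s) g \<in> Fpi_s p s \<longleftrightarrow>
      - Rk (2 * mseq s) g = Wk (mseq s) (p (\<lambda>l. a l div 2 ^ mseq s)) (\<lambda>l. a l mod 2 ^ mseq s)"
    by (simp add: mem_Fpi_s_iff[OF a(1)] Rk_flip_digit)
  moreover have "\<bar>x\<bar> = 1 \<Longrightarrow> \<bar>y\<bar> = 1 \<Longrightarrow> - x = y \<longleftrightarrow> x \<noteq> y" for x y :: real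
    by (auto simp: abs_if split: if_splits)
  ultimately show ?thesis
    by (simp add: mem_Fpi_s_iff[OF a] abs_Rk abs_Wk)
qed

lemma mseq_strict_mono_on: "strict_mono_on {1..} mseq"
proof (rule strict_mono_onI)
  fix s s' :: nat
  assume "s \<in> {1..}" "s < s'"
  then have "s - 1 < s' - 1"
    by simp
  moreover have "mseq (Suc i) < mseq (Suc (Suc i))" for i
    by simp
  ultimately have "mseq (Suc (s - 1)) < mseq (Suc (s' - 1))"
    using lift_Suc_mono_less[of "\<lambda>i. mseq (Suc i)"] by blast
  then show "mseq s < mseq s'"
    using \<open>s \<in> {1..}\<close> \<open>s < s'\<close> by (simp add: Suc_diff_1)
qed

definition digit_constraint ::
    "(nat \<Rightarrow> ('d::finite \<Rightarrow> nat) \<Rightarrow> ('d \<Rightarrow> nat)) \<Rightarrow> nat \<Rightarrow> ('d \<Rightarrow> nat \<Rightarrow> bool) set" where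
  "digit_constraint \<pi> j = (\<Inter>s\<in>{s. 1 \<le> s \<and> 2 * mseq s = j}. Fpi_s (\<pi> s) s)"

lemma Fpi_eq_INT_digit_constraint: "Fpi \<pi> = (\<Inter>j. digit_constraint \<pi> j)"
  by (auto simp: Fpi_def digit_constraint_def)

lemma digit_constraint_eq_Fpi_s:
  assumes "1 \<le> s"
  shows "digit_constraint \<pi> (2 * mseq s) = Fpi_s (\<pi> s) s"
proof -
  have "{s'. 1 \<le> s' \<and> 2 * mseq s' = 2 * mseq s} = {s}"
    using assms strict_mono_on_eqD[OF mseq_strict_mono_on] by auto
  then show ?thesis
    by (simp add: digit_constraint_def)
qed

lemma digit_constraint_eq_UNIV:
  "\<nexists>s. 1 \<le> s \<and> j = 2 * mseq s \<Longrightarrow> digit_constraint \<pi> j = UNIV"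
  by (auto simp: digit_constraint_def)

lemma digit_constraint_agree_below:
  "agree_below (Suc j) g h \<Longrightarrow> g \<in> digit_constraint \<pi> j \<Longrightarrow> h \<in> digit_constraint \<pi> j"
  unfolding digit_constraint_def using Fpi_s_agree_below by blast

lemma digit_constraint_correctable:
  "\<exists>g'. agree_below j g' g \<and> g' \<in> digit_constraint \<pi> j"
proof (cases "\<exists>s. 1 \<le> s \<and> j = 2 * mseq s")
  case True
  then obtain s where "1 \<le> s" "j = 2 * mseq s"
    by blast
  then have "g \<in> digit_constraint \<pi> j \<or> flip_digit undefined j g \<in> digit_constraint \<pi> j"
    using flip_digit_mem_Fpi_s_iff[of undefined s g "\<pi> s"] by (simp add: digit_constraint_eq_Fpi_s)
  moreover have "agree_below j g g" "agree_below j (flip_digit undefined j g) g"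
    by (simp_all add: agree_below_refl agree_below_flip_digit)
  ultimately show ?thesis
    by blast
next
  case False
  then show ?thesis
    using agree_below_refl by (auto simp: digit_constraint_eq_UNIV)
qed

section \<open>Cubes meeting \<open>F\<^sup>\<pi>\<close>\<close>

text \<open>Digit \<open>j\<close> is corrected whenever constraint \<open>j\<close> fails; this never changes earlier
  digits, so the digits stabilise and the limit point satisfies every constraint.\<close>

lemma agree_below_extension:
  fixes C :: "nat \<Rightarrow> ('d \<Rightarrow> nat \<Rightarrow> bool) set"
  assumes local: "\<And>j g h. agree_below (Suc j) g h \<Longrightarrow> g \<in> C j \<Longrightarrow> h \<in> C j"
    and correctable: "\<And>j g. \<exists>g'. agree_below j g' g \<and> g' \<in> C j"
    and h: "\<And>j. j < K \<Longrightarrow> h \<in> C j"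
  obtains g where "\<And>j. g \<in> C j" "agree_below K g h"
proof -
  define correct where "correct j g = (if g \<in> C j then g else SOME g'. agree_below j g' g \<and> g' \<in> C j)"
    for j g
  have correct: "agree_below j (correct j g) g" "correct j g \<in> C j" for j g
    using someI_ex[OF correctable[of j g]] by (auto simp: correct_def agree_below_refl)
  define G where "G = rec_nat h correct"
  have G_Suc: "G (Suc j) = correct j (G j)" for j
    by (simp add: G_def)
  have G_stable: "agree_below i (G j) (G i)" if "i \<le> j" for i j
    using that
  proof (induction j rule: dec_induct)
    case (step j)
    then show ?case
      using correct(1)[of j "G j"] agree_below_mono agree_below_trans by (metis G_Suc)
  qed (rule agree_below_refl)
  have G_h: "agree_below K (G j) h" for j
  proof (induction j)
    case 0
    show ?case
      by (simp add: G_def agree_below_refl)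
  next
    case (Suc j)
    show ?case
    proof (cases "K \<le> j")
      case True
      then show ?thesis
        using Suc.IH correct(1)[of j "G j"] agree_below_mono agree_below_trans by (metis G_Suc)
    next
      case False
      then have "agree_below (Suc j) h (G j)"
        using Suc.IH agree_below_mono agree_below_sym by (metis not_le Suc_leI)
      then have "G j \<in> C j"
        using False h local by auto
      then show ?thesis
        using Suc.IH by (simp add: G_Suc correct_def)
    qed
  qed
  define g where "g = (\<lambda>l t. G (Suc t) l t)"
  have g_G: "agree_below i g (G i)" for i
    unfolding agree_below_def g_def
  proof (intro allI impI)
    fix l t
    assume "t < i"
    then show "G (Suc t) l t = G i l t"
      using G_stable[of "Suc t" i] by (simp add: agree_below_def)
  qed
  show thesis
  proof
    show "g \<in> C j" for j
    proof (rule local)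
      show "agree_below (Suc j) (G (Suc j)) g"
        by (rule agree_below_sym[OF g_G])
      show "G (Suc j) \<in> C j"
        by (simp add: G_Suc correct(2))
    qed
    show "agree_below K g h"
      using G_h by (simp add: g_def agree_below_def)
  qed
qed

lemma dcube_Int_Fpi_nonempty_iff:
  "dcube k m \<inter> Fpi \<pi> \<noteq> {} \<longleftrightarrow> (\<exists>h\<in>dcube k m. \<forall>j<k. h \<in> digit_constraint \<pi> j)"
proof
  assume "\<exists>h\<in>dcube k m. \<forall>j<k. h \<in> digit_constraint \<pi> j"
  then obtain h where h: "h \<in> dcube k m" "\<And>j. j < k \<Longrightarrow> h \<in> digit_constraint \<pi> j"
    by blast
  obtain g where g: "\<And>j. g \<in> digit_constraint \<pi> j" "agree_below k g h"
    by (rule agree_below_extension[where C = "digit_constraint \<pi>" and K = k and h = h])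
      (auto intro: digit_constraint_agree_below digit_constraint_correctable h(2) that)
  have "g \<in> dcube k m"
    using dcube_agree_below[OF h(1) agree_below_sym[OF g(2)]] .
  moreover have "g \<in> Fpi \<pi>"
    using g(1) by (simp add: Fpi_eq_INT_digit_constraint)
  ultimately show "dcube k m \<inter> Fpi \<pi> \<noteq> {}"
    by blast
qed (auto simp: Fpi_eq_INT_digit_constraint)

lemma Fpi_nonempty: "Fpi \<pi> \<noteq> {}"
  using dcube_Int_Fpi_nonempty_iff[of 0] by (auto simp: dcube_def dint_def)

section \<open>Cancellation in the Fourier coefficients\<close>

definition flip_last_digit :: "'d \<Rightarrow> ('d \<Rightarrow> nat) \<Rightarrow> ('d \<Rightarrow> nat)" where
  "flip_last_digit l m = m(l := flip_bit 0 (m l))"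

lemma bit_flip_bit_0: "bit (flip_bit 0 x) i \<longleftrightarrow> (if i = 0 then \<not> bit x 0 else bit x i)"
  for x :: nat
  by (auto simp: bit_flip_bit_iff)

lemma flip_last_digit_div_2: "flip_last_digit l m l' div 2 = m l' div 2"
  by (simp add: flip_last_digit_def flip_bit_0)

lemma flip_last_digit_in_dbox: "m \<in> dbox (Suc j) \<Longrightarrow> flip_last_digit l m \<in> dbox (Suc j)"
proof -
  have "x < 2 ^ Suc j \<longleftrightarrow> x div 2 < 2 ^ j" for x :: nat
    by (simp add: div_less_iff_less_mult mult.commute)
  then show "m \<in> dbox (Suc j) \<Longrightarrow> flip_last_digit l m \<in> dbox (Suc j)"
    by (simp add: dbox_def flip_last_digit_div_2)
qed

lemma flip_last_digit_commute:
  "flip_last_digit l (flip_last_digit l' m) = flip_last_digit l' (flip_last_digit l m)"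
  by (cases "l = l'") (simp_all add: flip_last_digit_def fun_upd_twist)

lemma flip_last_digit_flip_last_digit: "flip_last_digit l (flip_last_digit l m) = m"
proof -
  have "flip_bit 0 (flip_bit 0 x) = x" for x :: nat
    by (rule bit_eqI) (simp add: bit_flip_bit_0)
  then show ?thesis
    by (simp add: flip_last_digit_def)
qed

lemma dpt_flip_bit_0: "dpt (Suc j) (flip_bit 0 x) = (dpt (Suc j) x)(j := \<not> dpt (Suc j) x j)"
proof
  fix t
  show "dpt (Suc j) (flip_bit 0 x) t = ((dpt (Suc j) x)(j := \<not> dpt (Suc j) x j)) t"
    by (cases "t < j") (auto simp: dpt_def bit_flip_bit_0)
qed

lemma Wk_flip_last_digit:
  "Wk (Suc j) n (flip_last_digit l m) = (if bit (n l) j then -1 else 1) * Wk (Suc j) n m"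
proof -
  have "(\<lambda>l'. dpt (Suc j) (flip_last_digit l m l')) = flip_digit l j (\<lambda>l'. dpt (Suc j) (m l'))"
    by (rule ext) (simp add: flip_last_digit_def flip_digit_def dpt_flip_bit_0)
  then show ?thesis
    by (simp add: Wk_def walshd_flip_digit)
qed

lemma dcube_flip_last_digit:
  assumes "g \<in> dcube (Suc j) m"
  shows "flip_digit l j g \<in> dcube (Suc j) (flip_last_digit l m)"
  unfolding mem_dcube_iff
proof (intro allI impI)
  fix l' t
  assume "t < Suc j"
  then show "flip_digit l j g l' t = bit (flip_last_digit l m l') (Suc j - 1 - t)"
    using assms by (cases "t = j") (auto simp: mem_dcube_iff flip_last_digit_def flip_digit_def bit_flip_bit_0)
qed

lemma sum_Wk_children_meeting_Fpi_eq_0_if_involution: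
  fixes \<iota> :: "('d::finite \<Rightarrow> nat) \<Rightarrow> ('d \<Rightarrow> nat)" and \<phi> :: "('d \<Rightarrow> nat \<Rightarrow> bool) \<Rightarrow> ('d \<Rightarrow> nat \<Rightarrow> bool)"
  assumes \<iota>_dbox: "\<And>m. m \<in> dbox (Suc j) \<Longrightarrow> \<iota> m \<in> dbox (Suc j)"
    and \<iota>_div_2: "\<And>m l. \<iota> m l div 2 = m l div 2"
    and \<iota>_\<iota>: "\<And>m. \<iota> (\<iota> m) = m"
    and Wk_\<iota>: "\<And>m. Wk (Suc j) n (\<iota> m) = - Wk (Suc j) n m"
    and \<phi>_dcube: "\<And>g m. g \<in> dcube (Suc j) m \<Longrightarrow> \<phi> g \<in> dcube (Suc j) (\<iota> m)"
    and \<phi>_agree: "\<And>g. agree_below j (\<phi> g) g"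
    and \<phi>_constraint: "\<And>g. g \<in> digit_constraint \<pi> j \<Longrightarrow> \<phi> g \<in> digit_constraint \<pi> j"
  shows "(\<Sum>m | m \<in> dbox (Suc j) \<and> (\<lambda>l. m l div 2) = q \<and> dcube (Suc j) m \<inter> Fpi \<pi> \<noteq> {}.
      Wk (Suc j) n m) = 0"
proof (rule sum_involution_eq_0)
  fix m
  assume m: "m \<in> {m. m \<in> dbox (Suc j) \<and> (\<lambda>l. m l div 2) = q \<and> dcube (Suc j) m \<inter> Fpi \<pi> \<noteq> {}}"
  show "Wk (Suc j) n (\<iota> m) + Wk (Suc j) n m = 0"
    by (simp add: Wk_\<iota>)
  show "\<iota> (\<iota> m) = m"
    by (rule \<iota>_\<iota>)
  show "\<iota> m \<noteq> m"
  proof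
    assume "\<iota> m = m"
    then have "Wk (Suc j) n m = 0"
      using Wk_\<iota>[of m] by simp
    then show False
      using abs_Wk[of "Suc j" n m] by simp
  qed
  obtain h where h: "h \<in> dcube (Suc j) m" "\<And>i. i < Suc j \<Longrightarrow> h \<in> digit_constraint \<pi> i"
    using m dcube_Int_Fpi_nonempty_iff by blast
  have "\<phi> h \<in> digit_constraint \<pi> i" if "i < Suc j" for i
  proof (cases "i = j")
    case True
    then show ?thesis
      using h(2) \<phi>_constraint by simp
  next
    case False
    then have "agree_below (Suc i) h (\<phi> h)"
      using that agree_below_mono[OF agree_below_sym[OF \<phi>_agree]] by simp
    then show ?thesis
      using h(2) that digit_constraint_agree_below by blast
  qed
  then have "dcube (Suc j) (\<iota> m) \<inter> Fpi \<pi> \<noteq> {}"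
    using \<phi>_dcube[OF h(1)] dcube_Int_Fpi_nonempty_iff by blast
  then show "\<iota> m \<in> {m. m \<in> dbox (Suc j) \<and> (\<lambda>l. m l div 2) = q \<and> dcube (Suc j) m \<inter> Fpi \<pi> \<noteq> {}}"
    using m \<iota>_dbox by (simp add: \<iota>_div_2)
qed

lemma sum_Wk_children_meeting_Fpi_eq_0:
  assumes l1: "bit (n l1) j"
    and l2: "\<And>s. 1 \<le> s \<Longrightarrow> j = 2 * mseq s \<Longrightarrow> \<exists>l2. \<not> bit (n l2) j"
  shows "(\<Sum>m | m \<in> dbox (Suc j) \<and> (\<lambda>l. m l div 2) = q \<and> dcube (Suc j) m \<inter> Fpi \<pi> \<noteq> {}.
      Wk (Suc j) n m) = 0"
proof (cases "\<exists>s. 1 \<le> s \<and> j = 2 * mseq s")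
  case False
  show ?thesis
    by (rule sum_Wk_children_meeting_Fpi_eq_0_if_involution[where \<iota> = "flip_last_digit l1"
          and \<phi> = "flip_digit l1 j"])
      (simp_all add: flip_last_digit_in_dbox flip_last_digit_div_2 flip_last_digit_flip_last_digit
        Wk_flip_last_digit l1 dcube_flip_last_digit agree_below_flip_digit
        digit_constraint_eq_UNIV[OF False])
next
  case True
  txt \<open>Flipping digit \<open>j\<close> of \<open>l\<^sub>1\<close> alone would leave \<open>F\<^sub>s\<^sup>\<pi>\<close>; a second flip in a coordinate
    where bit \<open>j\<close> of \<open>n\<close> is clear restores membership without undoing the sign change.\<close>
  then obtain s where s: "1 \<le> s" "j = 2 * mseq s"
    by blast
  obtain l2 where "\<not> bit (n l2) j"
    using l2[OF s] by blast
  show ?thesis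
  proof (rule sum_Wk_children_meeting_Fpi_eq_0_if_involution[where
        \<iota> = "\<lambda>m. flip_last_digit l1 (flip_last_digit l2 m)"
        and \<phi> = "\<lambda>g. flip_digit l1 j (flip_digit l2 j g)"])
    show "flip_last_digit l1 (flip_last_digit l2 (flip_last_digit l1 (flip_last_digit l2 m))) = m"
      for m
      by (simp only: flip_last_digit_commute[of l2 l1] flip_last_digit_flip_last_digit)
    show "agree_below j (flip_digit l1 j (flip_digit l2 j g)) g" for g
      by (rule agree_below_trans[of _ _ "flip_digit l2 j g"]) (simp_all add: agree_below_flip_digit)
    show "flip_digit l1 j (flip_digit l2 j g) \<in> digit_constraint \<pi> j"
      if "g \<in> digit_constraint \<pi> j" for g
      using that by (simp add: s(2) digit_constraint_eq_Fpi_s[OF s(1)] flip_digit_mem_Fpi_s_iff)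
  qed (simp_all add: flip_last_digit_in_dbox flip_last_digit_div_2 Wk_flip_last_digit l1
      \<open>\<not> bit (n l2) j\<close> dcube_flip_last_digit)
qed

lemma fcoef_tauE_zero:
  assumes "E \<noteq> {}"
  shows "fcoef (tauE E) (\<lambda>_::'d::finite. 0) = 1"
proof -
  have "(LEAST k. \<forall>l::'d. (0::nat) < 2 ^ k) = 0"
    by (rule Least_eq_0) simp
  moreover have "(dbox 0 :: ('d \<Rightarrow> nat) set) = {\<lambda>_. 0}"
    by (auto simp: dbox_def)
  moreover have "Wk 0 (\<lambda>_::'d. 0) (\<lambda>_. 0) = 1"
    by (simp add: Wk_def walshd_def walsh_def)
  ultimately show ?thesis
    using assms by (simp add: fcoef_def)
qed

lemma fcoef_tauE_eq_0_if_children_cancel: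
  fixes E :: "('d::finite \<Rightarrow> nat \<Rightarrow> bool) set"
  assumes rank: "(LEAST k. \<forall>l. n l < 2 ^ k) = Suc j"
    and cancel: "\<And>q. (\<Sum>m | m \<in> dbox (Suc j) \<and> (\<lambda>l. m l div 2) = q \<and> dcube (Suc j) m \<inter> E \<noteq> {}.
        Wk (Suc j) n m) = 0"
  shows "fcoef (tauE E) n = 0"
proof -
  let ?parent = "\<lambda>m::'d \<Rightarrow> nat. \<lambda>l. m l div 2"
  let ?meets = "\<lambda>m. dcube (Suc j) m \<inter> E \<noteq> {}"
  define w where "w q = tauE E j q /
      real (card {\<sigma>::'d \<Rightarrow> bool. dcube (Suc j) (\<lambda>l. 2 * q l + of_bool (\<sigma> l)) \<inter> E \<noteq> {}})" for q
  have tauE_Suc: "tauE E (Suc j) m = (if ?meets m then w (?parent m) else 0)" for m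
    by (simp add: w_def)
  have parent_dbox: "?parent ` dbox (Suc j) \<subseteq> dbox j"
    by (auto simp: dbox_def less_mult_imp_div_less mult.commute)
  have children_sum: "(\<Sum>m | m \<in> dbox (Suc j) \<and> ?parent m = q. Wk (Suc j) n m * tauE E (Suc j) m)
      = w q * (\<Sum>m | m \<in> dbox (Suc j) \<and> ?parent m = q \<and> ?meets m. Wk (Suc j) n m)" for q
  proof -
    have fin: "finite {m. m \<in> dbox (Suc j) \<and> ?parent m = q}"
      using finite_dbox by (rule finite_subset[rotated]) blast
    have "(\<Sum>m | m \<in> dbox (Suc j) \<and> ?parent m = q. Wk (Suc j) n m * tauE E (Suc j) m)
        = (\<Sum>m | m \<in> dbox (Suc j) \<and> ?parent m = q. if ?meets m then w q * Wk (Suc j) n m else 0)"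
      by (rule sum.cong) (auto simp: tauE_Suc simp del: tauE.simps)
    also have "\<dots> = (\<Sum>m | m \<in> dbox (Suc j) \<and> ?parent m = q \<and> ?meets m. w q * Wk (Suc j) n m)"
      by (subst sum.inter_filter[OF fin, symmetric]) (rule sum.cong; auto)
    finally show ?thesis
      by (simp add: sum_distrib_left)
  qed
  have "fcoef (tauE E) n = (\<Sum>m\<in>dbox (Suc j). Wk (Suc j) n m * tauE E (Suc j) m)"
    by (simp add: fcoef_def rank)
  also have "\<dots> = (\<Sum>q\<in>dbox j. \<Sum>m | m \<in> dbox (Suc j) \<and> ?parent m = q. Wk (Suc j) n m * tauE E (Suc j) m)"
    by (rule sum.group[OF finite_dbox finite_dbox parent_dbox, symmetric])
  also have "\<dots> = 0"
    by (simp add: children_sum cancel del: tauE.simps)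
  finally show ?thesis .
qed

lemma least_rank_eq_Suc:
  fixes n :: "'d::finite \<Rightarrow> nat"
  assumes "n \<noteq> (\<lambda>_. 0)"
  obtains j l1 where "(LEAST k. \<forall>l. n l < 2 ^ k) = Suc j" "\<forall>l. n l < 2 ^ Suc j" "bit (n l1) j"
proof -
  define k where "k = (LEAST k. \<forall>l. n l < 2 ^ k)"
  have bound_Max: "n l < 2 ^ Max (range n)" for l
  proof -
    have "n l \<le> Max (range n)"
      by (rule Max_ge) simp_all
    then show ?thesis
      using less_exp[of "Max (range n)"] by linarith
  qed
  have k: "\<forall>l. n l < 2 ^ k"
    unfolding k_def by (rule LeastI_ex) (use bound_Max in blast)
  then have "k \<noteq> 0"
    using assms by auto
  then obtain j where j: "k = Suc j"
    using not0_implies_Suc by blast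
  then have "\<not> (\<forall>l. n l < 2 ^ j)"
    using not_less_Least[of j "\<lambda>k. \<forall>l. n l < 2 ^ k"] by (simp add: k_def)
  then obtain l1 where "2 ^ j \<le> n l1"
    by (auto simp: not_less)
  then have "bit (n l1) j"
    using k j bit_of_between_powers by blast
  show thesis
  proof (rule that)
    show "(LEAST k. \<forall>l. n l < 2 ^ k) = Suc j"
      using j by (simp add: k_def)
    show "\<forall>l. n l < 2 ^ Suc j"
      using k j by simp
  qed fact
qed

lemma ex_not_bit_if_not_in_block:
  assumes "n \<notin> block j" "\<forall>l. n l < 2 ^ Suc j"
  shows "\<exists>l. \<not> bit (n l) j"
proof -
  obtain l where "n l < 2 ^ j"
    using assms by (auto simp: block_def not_le)
  then show ?thesis
    using not_bit_of_less_power by blast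
qed

lemma fcoef_tauE_Fpi_eq_0:
  fixes n :: "'d::finite \<Rightarrow> nat"
  assumes "n \<noteq> (\<lambda>_. 0)" "\<forall>s\<ge>1. n \<notin> block (2 * mseq s)"
  shows "fcoef (tauE (Fpi \<pi>)) n = 0"
proof -
  obtain j l1 where rank: "(LEAST k. \<forall>l. n l < 2 ^ k) = Suc j"
    and bound: "\<forall>l. n l < 2 ^ Suc j" and top: "bit (n l1) j"
    using least_rank_eq_Suc[OF assms(1)] by blast
  have "\<exists>l2. \<not> bit (n l2) j" if "1 \<le> s" "j = 2 * mseq s" for s
    using ex_not_bit_if_not_in_block[OF _ bound] assms(2) that by blast
  then show ?thesis
    by (intro fcoef_tauE_eq_0_if_children_cancel[OF rank] sum_Wk_children_meeting_Fpi_eq_0[of n l1 j, OF top])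
qed

theorem lemma3:
  assumes d2: "card (UNIV :: 'd set) \<ge> 2"
  shows "fcoef (tauE (Fset :: ('d::finite \<Rightarrow> nat \<Rightarrow> bool) set)) (\<lambda>_. 0) = 1
       \<and> (\<forall>n :: 'd \<Rightarrow> nat. n \<noteq> (\<lambda>_. 0) \<and> (\<forall>s\<ge>1. n \<notin> block (2 * mseq s))
             \<longrightarrow> fcoef (tauE (Fset :: ('d::finite \<Rightarrow> nat \<Rightarrow> bool) set)) n = 0)
       \<and> (\<forall>\<pi> :: nat \<Rightarrow> ('d \<Rightarrow> nat) \<Rightarrow> ('d \<Rightarrow> nat).
            (\<forall>s\<ge>1. bij_betw (\<pi> s) (dbox (mseq s)) (dbox (mseq s))) \<longrightarrow>
              fcoef (tauE (Fpi \<pi>)) (\<lambda>_. 0) = 1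
            \<and> (\<forall>n :: 'd \<Rightarrow> nat. n \<noteq> (\<lambda>_. 0) \<and> (\<forall>s\<ge>1. n \<notin> block (2 * mseq s))
                 \<longrightarrow> fcoef (tauE (Fpi \<pi>)) n = 0))"
proof -
  have Fset_eq: "(Fset :: ('d \<Rightarrow> nat \<Rightarrow> bool) set) = Fpi (\<lambda>_. id)"
    by (simp add: Fset_def Fpi_def F_s_def Fpi_s_def)
  show ?thesis
    unfolding Fset_eq using fcoef_tauE_zero[OF Fpi_nonempty] fcoef_tauE_Fpi_eq_0 by auto
qed

end
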